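(* Let $A,B\in\mathbb{C}$ with $4A^3+27B^2\neq0$, and let $C=\{(x,y)\in\mathbb{C}^2: y^2=x^3+Ax+B\}$ be the corresponding smooth affine cubic curve. Then for every polynomial $P\in\mathbb{C}[x,y]$ the restriction $P|_C:C\to\mathbb{C}$ has at least one critical point on $C$, i.e. there is a point of $C$ at which the differential of $P|_C$ vanishes.
   Context: The curve $C$ is parametrized as $t\mapsto(x(t),y(t))$, $t\in\mathbb{C}\setminus\Gamma$, where $\Gamma\subset\mathbb{C}$ is a lattice of rank two and $x,y$ are $\Gamma$-periodic meromorphic (elliptic) functions, holomorphic on $\mathbb{C}\setminus\Gamma$ with poles at the points of $\Gamma$, satisfying $y^2=x^3+Ax+B$; this parametrization is a local biholomorphism onto $C$. *)

theory Defs
  imports "HOL-Analysis.Analysis"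
begin

definition poly2 :: "(nat \<Rightarrow> nat \<Rightarrow> complex) \<Rightarrow> nat \<Rightarrow> complex \<times> complex \<Rightarrow> complex" where
  "poly2 c n = (\<lambda>(x, y). \<Sum>i\<le>n. \<Sum>j\<le>n. c i j * x ^ i * y ^ j)"

definition cubic_eq :: "complex \<Rightarrow> complex \<Rightarrow> complex \<times> complex \<Rightarrow> complex" where
  "cubic_eq A B = (\<lambda>(x, y). y ^ 2 - (x ^ 3 + A * x + B))"

definition cubic_curve :: "complex \<Rightarrow> complex \<Rightarrow> (complex \<times> complex) set" where
  "cubic_curve A B = {(x, y). y ^ 2 = x ^ 3 + A * x + B}"

text \<open>p is a critical point of P restricted to C: p lies on C and the differential of P at p
  vanishes on the tangent space of C at p, i.e. on the kernel of dF_p.\<close>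
definition critical_point_on_curve ::
  "complex \<Rightarrow> complex \<Rightarrow> (complex \<times> complex \<Rightarrow> complex) \<Rightarrow> complex \<times> complex \<Rightarrow> bool" where
  "critical_point_on_curve A B P p \<longleftrightarrow>
     p \<in> cubic_curve A B \<and>
     (\<exists>P' F'. (P has_derivative P') (at p) \<and> (cubic_eq A B has_derivative F') (at p) \<and>
        (\<forall>v. F' v = 0 \<longrightarrow> P' v = 0))"

end

theory Submission
  imports Defs "HOL-Computational_Algebra.Fundamental_Theorem_Algebra"
begin

text \<open>Write the curve as \<open>y\<^sup>2 = f(x)\<close>. On it the vector field \<open>D = 2y \<partial>\<^sub>x + f'(x) \<partial>\<^sub>y\<close> is
  tangent and, by smoothness, nowhere zero, so the critical points of \<open>P\<close> on the curve are the zeros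
  of \<open>D P\<close>. Reducing \<open>P\<close> modulo \<open>y\<^sup>2 - f\<close> to \<open>a(x) + y b(x)\<close> gives \<open>D P = y H(x) + G(x)\<close> on
  the curve, with \<open>H = 2a'\<close> and \<open>G = f'b + 2fb'\<close>. If \<open>D P\<close> had no zero, it would be a unit of the
  coordinate ring; as \<open>deg f\<close> is odd, the norm \<open>G\<^sup>2 - f H\<^sup>2\<close> shows that units are constants.
  But \<open>b G = (f b\<^sup>2)'\<close> has degree \<open>> deg b\<close> unless \<open>b = 0\<close>, so \<open>G\<close> constant forces \<open>b = 0\<close>,
  hence \<open>D P = 0\<close>: a contradiction.\<close>

lemma degree_diff_eq_max:
  fixes p q :: "'a::ab_group_add poly"
  assumes "degree p \<noteq> degree q"
  shows "degree (p - q) = max (degree p) (degree q)"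
  using assms degree_add_eq_left[of "- q" p] degree_add_eq_right[of p "- q"]
  by (cases "degree p < degree q") (auto simp: max_def)

lemma pderiv_sum: "pderiv (sum g S) = (\<Sum>s\<in>S. pderiv (g s))"
  using higher_pderiv_sum[of 1] by simp

lemma poly_pderiv_monom_mult_power:
  fixes f :: "'a::idom poly"
  shows "poly (pderiv (monom 1 i * f ^ k)) x =
    of_nat i * x ^ (i - 1) * poly f x ^ k + x ^ i * (of_nat k * poly f x ^ (k - 1) * poly (pderiv f) x)"
  by (simp add: pderiv_mult pderiv_power pderiv_monom poly_monom algebra_simps)

lemma nowhere_zero_on_curve_imp_constant:
  fixes f G H :: "complex poly"
  assumes deg_f: "odd (degree f)"
    and nonzero: "\<And>x y. y ^ 2 = poly f x \<Longrightarrow> y * poly H x + poly G x \<noteq> 0"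
  shows "H = 0 \<and> degree G = 0"
proof -
  have no_root_imp_const: "degree p = 0" if "\<And>x. poly p x \<noteq> 0" for p :: "complex poly"
    using fundamental_theorem_of_algebra[of p] constant_degree[of p] that by blast
  have "poly (G ^ 2 - f * H ^ 2) x \<noteq> 0" for x
  proof -
    define y where "y = csqrt (poly f x)"
    have "poly (G ^ 2 - f * H ^ 2) x = (y * poly H x + poly G x) * (- y * poly H x + poly G x)"
      by (simp add: y_def algebra_simps power2_eq_square[symmetric])
    then show ?thesis using nonzero[of y x] nonzero[of "- y" x] by (simp add: y_def)
  qed
  then have norm_const: "degree (G ^ 2 - f * H ^ 2) = 0" by (rule no_root_imp_const)
  have H0: "H = 0"
  proof (rule ccontr)
    assume "H \<noteq> 0"
    moreover have "f \<noteq> 0" using deg_f by auto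
    ultimately have deg_fH: "degree (f * H ^ 2) = degree f + 2 * degree H"
      by (simp add: degree_mult_eq degree_power_eq)
    moreover have "degree (G ^ 2) = 2 * degree G"
      by (cases "G = 0") (simp_all add: degree_power_eq)
    ultimately have "degree (G ^ 2) \<noteq> degree (f * H ^ 2)"
      using deg_f by presburger
    then have "degree (G ^ 2 - f * H ^ 2) \<ge> degree f"
      using deg_fH by (simp add: degree_diff_eq_max)
    then show False using norm_const deg_f by presburger
  qed
  have "poly G x \<noteq> 0" for x
    using nonzero[of "csqrt (poly f x)" x] H0 by simp
  then show ?thesis using H0 no_root_imp_const by blast
qed

text \<open>On the curve \<open>y\<^sup>2 = f(x)\<close>, \<open>D (y b(x)) = 2y\<^sup>2 b'(x) + f'(x) b(x)\<close> is the polynomial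
  \<open>odd_derivation f b\<close> in \<open>x\<close>.\<close>

definition odd_derivation :: "'a::idom poly \<Rightarrow> 'a poly \<Rightarrow> 'a poly" where
  "odd_derivation f b = pderiv f * b + 2 * f * pderiv b"

lemma poly_odd_derivation:
  "poly (odd_derivation f b) x = poly (pderiv f) x * poly b x + 2 * poly f x * poly (pderiv b) x"
  by (simp add: odd_derivation_def)

lemma odd_derivation_constant_imp_zero:
  fixes f b :: "'a::{idom,ring_char_0} poly"
  assumes const: "degree (odd_derivation f b) = 0" and deg_f: "degree f \<ge> 2"
  shows "b = 0"
proof (rule ccontr)
  assume "b \<noteq> 0"
  moreover have "f \<noteq> 0" using deg_f by auto
  ultimately have "degree (pderiv (f * b ^ 2)) = degree f + 2 * degree b - 1"
    by (simp add: degree_pderiv degree_mult_eq degree_power_eq)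
  moreover have "pderiv (f * b ^ 2) = b * odd_derivation f b"
    by (simp add: odd_derivation_def pderiv_mult pderiv_power algebra_simps numeral_2_eq_2)
  moreover have "degree (b * odd_derivation f b) \<le> degree b"
    using degree_mult_le[of b "odd_derivation f b"] const by simp
  ultimately show False using deg_f by simp
qed

lemma tangential_derivative_monomial:
  fixes f :: "'a::idom poly"
  assumes on_curve: "y ^ 2 = poly f x"
  shows "2 * y * (of_nat i * x ^ (i - 1) * y ^ j) + poly (pderiv f) x * (x ^ i * (of_nat j * y ^ (j - 1))) =
    (if even j then y * poly (2 * pderiv (monom 1 i * f ^ (j div 2))) x
     else poly (odd_derivation f (monom 1 i * f ^ (j div 2))) x)"
proof -
  have even_power: "y ^ (2 * k) = poly f x ^ k" for k
    by (simp add: power_mult on_curve)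
  have odd_power: "y ^ (2 * k + 1) = y * poly f x ^ k" for k
    by (simp add: even_power)
  show ?thesis
  proof (cases "even j")
    case True
    then obtain k where j: "j = 2 * k" by blast
    show ?thesis
    proof (cases k)
      case 0
      then show ?thesis using j by (simp add: pderiv_monom poly_monom)
    next
      case (Suc k')
      have pow: "y ^ j = poly f x ^ k" "y ^ (j - 1) = y * poly f x ^ (k - 1)"
        using even_power[of k] odd_power[of k'] j Suc by simp_all
      have "j div 2 = k" using j by simp
      show ?thesis using True unfolding pow \<open>j div 2 = k\<close>
        by (simp add: poly_pderiv_monom_mult_power j algebra_simps)
    qed
  next
    case False
    then obtain k where j: "j = 2 * k + 1" using oddE by blast
    have pow: "y ^ j = y * poly f x ^ k" "y ^ (j - 1) = poly f x ^ k"
      using even_power[of k] odd_power[of k] j by simp_all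
    have "j div 2 = k" using j by simp
    have y_square: "y * (y * z) = poly f x * z" for z
      using on_curve by (simp add: power2_eq_square)
    have derivation: "poly (odd_derivation f (monom 1 i * f ^ k)) x =
        poly (pderiv f) x * x ^ i * poly f x ^ k + 2 * poly f x *
        (of_nat i * x ^ (i - 1) * poly f x ^ k + x ^ i * (of_nat k * poly f x ^ (k - 1) * poly (pderiv f) x))"
      by (simp add: poly_odd_derivation poly_pderiv_monom_mult_power poly_monom)
    show ?thesis using False unfolding pow \<open>j div 2 = k\<close> derivation
      by (cases k) (simp_all add: j algebra_simps y_square)
  qed
qed

definition poly2_dx :: "(nat \<Rightarrow> nat \<Rightarrow> complex) \<Rightarrow> nat \<Rightarrow> complex \<times> complex \<Rightarrow> complex" where
  "poly2_dx c n = (\<lambda>(x, y). \<Sum>i\<le>n. \<Sum>j\<le>n. c i j * (of_nat i * x ^ (i - 1) * y ^ j))"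

definition poly2_dy :: "(nat \<Rightarrow> nat \<Rightarrow> complex) \<Rightarrow> nat \<Rightarrow> complex \<times> complex \<Rightarrow> complex" where
  "poly2_dy c n = (\<lambda>(x, y). \<Sum>i\<le>n. \<Sum>j\<le>n. c i j * (x ^ i * (of_nat j * y ^ (j - 1))))"

text \<open>On the curve \<open>y\<^sup>2 = f(x)\<close> one has \<open>poly2 c n (x, y) = a(x) + y b(x)\<close> with \<open>a\<close> the even
  and \<open>b\<close> the odd part (in \<open>y\<close>) below.\<close>

definition poly2_even_part :: "(nat \<Rightarrow> nat \<Rightarrow> 'a::comm_semiring_1) \<Rightarrow> nat \<Rightarrow> 'a poly \<Rightarrow> 'a poly" where
  "poly2_even_part c n f =
     (\<Sum>i\<le>n. \<Sum>j\<le>n. if even j then smult (c i j) (monom 1 i * f ^ (j div 2)) else 0)"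

definition poly2_odd_part :: "(nat \<Rightarrow> nat \<Rightarrow> 'a::comm_semiring_1) \<Rightarrow> nat \<Rightarrow> 'a poly \<Rightarrow> 'a poly" where
  "poly2_odd_part c n f =
     (\<Sum>i\<le>n. \<Sum>j\<le>n. if odd j then smult (c i j) (monom 1 i * f ^ (j div 2)) else 0)"

lemma tangential_derivative_poly2:
  assumes on_curve: "y ^ 2 = poly f x"
  shows "2 * y * poly2_dx c n (x, y) + poly (pderiv f) x * poly2_dy c n (x, y) =
    y * poly (2 * pderiv (poly2_even_part c n f)) x + poly (odd_derivation f (poly2_odd_part c n f)) x"
proof -
  have "2 * y * poly2_dx c n (x, y) + poly (pderiv f) x * poly2_dy c n (x, y) =
      (\<Sum>i\<le>n. \<Sum>j\<le>n. c i j *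
        (2 * y * (of_nat i * x ^ (i - 1) * y ^ j) + poly (pderiv f) x * (x ^ i * (of_nat j * y ^ (j - 1)))))"
    by (simp add: poly2_dx_def poly2_dy_def sum_distrib_left sum.distrib algebra_simps)
  also have "\<dots> = (\<Sum>i\<le>n. \<Sum>j\<le>n.
      y * poly (2 * pderiv (if even j then smult (c i j) (monom 1 i * f ^ (j div 2)) else 0)) x +
      poly (odd_derivation f (if odd j then smult (c i j) (monom 1 i * f ^ (j div 2)) else 0)) x)"
    unfolding tangential_derivative_monomial[OF on_curve]
    by (intro sum.cong refl) (simp add: poly_odd_derivation pderiv_smult algebra_simps)
  also have "\<dots> = y * poly (2 * pderiv (poly2_even_part c n f)) x +
      poly (odd_derivation f (poly2_odd_part c n f)) x"
    by (simp add: poly2_even_part_def poly2_odd_part_def poly_odd_derivation pderiv_sum poly_sum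
        sum_distrib_left sum.distrib)
  finally show ?thesis .
qed

lemma tangential_derivative_poly2_has_zero:
  fixes f :: "complex poly"
  assumes odd_deg: "odd (degree f)" and deg_f: "degree f \<ge> 2"
  obtains x y where "y ^ 2 = poly f x"
    and "2 * y * poly2_dx c n (x, y) + poly (pderiv f) x * poly2_dy c n (x, y) = 0"
proof -
  let ?D = "\<lambda>x y. 2 * y * poly2_dx c n (x, y) + poly (pderiv f) x * poly2_dy c n (x, y)"
  have "\<exists>x y. y ^ 2 = poly f x \<and> ?D x y = 0"
  proof (rule ccontr)
    assume no_zero: "\<nexists>x y. y ^ 2 = poly f x \<and> ?D x y = 0"
    then have "y * poly (2 * pderiv (poly2_even_part c n f)) x +
        poly (odd_derivation f (poly2_odd_part c n f)) x \<noteq> 0" if "y ^ 2 = poly f x" for x y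
      using that tangential_derivative_poly2[OF that, of c n] by auto
    then have H0: "2 * pderiv (poly2_even_part c n f) = 0"
      and "degree (odd_derivation f (poly2_odd_part c n f)) = 0"
      using nowhere_zero_on_curve_imp_constant[OF odd_deg] by blast+
    then have "poly2_odd_part c n f = 0"
      using odd_derivation_constant_imp_zero deg_f by blast
    then show False
      using no_zero tangential_derivative_poly2[of "csqrt (poly f 0)" f 0 c n] H0
      by (simp add: odd_derivation_def)
  qed
  then show ?thesis using that by blast
qed

lemma poly2_has_derivative:
  "(poly2 c n has_derivative (\<lambda>v. poly2_dx c n p * fst v + poly2_dy c n p * snd v)) (at p)"
proof -
  have poly2_eq: "poly2 c n = (\<lambda>q. \<Sum>i\<le>n. \<Sum>j\<le>n. c i j * fst q ^ i * snd q ^ j)"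
    by (auto simp: poly2_def fun_eq_iff split: prod.splits)
  show ?thesis
    unfolding poly2_eq
    by (auto intro!: derivative_eq_intros simp: poly2_dx_def poly2_dy_def split_beta fun_eq_iff
        sum_distrib_left sum_distrib_right sum.distrib algebra_simps)
qed

lemma cubic_eq_has_derivative:
  "(cubic_eq A B has_derivative (\<lambda>v. 2 * snd p * snd v - (3 * fst p ^ 2 + A) * fst v)) (at p)"
proof -
  have cubic_eq_eq: "cubic_eq A B = (\<lambda>q. snd q ^ 2 - (fst q ^ 3 + A * fst q + B))"
    by (auto simp: cubic_eq_def fun_eq_iff split: prod.splits)
  show ?thesis
    unfolding cubic_eq_eq by (auto intro!: derivative_eq_intros simp: algebra_simps)
qed

lemma critical_point_on_curveI:
  assumes on_curve: "(x, y) \<in> cubic_curve A B"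
    and nonsingular: "y \<noteq> 0 \<or> 3 * x ^ 2 + A \<noteq> 0"
    and P_deriv: "(P has_derivative (\<lambda>v. Px * fst v + Py * snd v)) (at (x, y))"
    and tangential: "2 * y * Px + (3 * x ^ 2 + A) * Py = 0"
  shows "critical_point_on_curve A B P (x, y)"
proof -
  have kernel: "Px * fst v + Py * snd v = 0"
    if tangent: "2 * y * snd v - (3 * x ^ 2 + A) * fst v = 0" for v :: "complex \<times> complex"
  proof (cases "y = 0")
    case True
    then show ?thesis using nonsingular tangent tangential by simp
  next
    case False
    have "2 * y * (Px * fst v + Py * snd v) = fst v * (2 * y * Px) + Py * (2 * y * snd v)"
      by (simp add: algebra_simps)
    also have "\<dots> = fst v * (2 * y * Px + (3 * x ^ 2 + A) * Py)"
      using tangent by (simp add: algebra_simps)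
    finally show ?thesis using False tangential by simp
  qed
  show ?thesis
    using on_curve P_deriv cubic_eq_has_derivative[of A B "(x, y)", unfolded fst_conv snd_conv] kernel
    unfolding critical_point_on_curve_def by blast
qed

definition cubic_poly :: "complex \<Rightarrow> complex \<Rightarrow> complex poly" where
  "cubic_poly A B = [:B, A, 0, 1:]"

lemma poly_cubic_poly: "poly (cubic_poly A B) x = x ^ 3 + A * x + B"
  by (simp add: cubic_poly_def algebra_simps power3_eq_cube)

lemma poly_pderiv_cubic_poly: "poly (pderiv (cubic_poly A B)) x = 3 * x ^ 2 + A"
  by (simp add: cubic_poly_def pderiv_pCons algebra_simps power2_eq_square)

lemma degree_cubic_poly: "degree (cubic_poly A B) = 3"
  by (simp add: cubic_poly_def)

lemma cubic_curve_nonsingular: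
  fixes A B x y :: complex
  assumes discr: "4 * A ^ 3 + 27 * B ^ 2 \<noteq> 0" and on_curve: "y ^ 2 = x ^ 3 + A * x + B"
  shows "y \<noteq> 0 \<or> 3 * x ^ 2 + A \<noteq> 0"
proof (rule ccontr)
  assume "\<not> (y \<noteq> 0 \<or> 3 * x ^ 2 + A \<noteq> 0)"
  then have "y = 0" and A: "A = - 3 * x ^ 2"
    by (auto simp: algebra_simps eq_neg_iff_add_eq_0)
  then have B: "B = 2 * x ^ 3"
    using on_curve by (simp add: algebra_simps power3_eq_cube power2_eq_square)
  have "4 * A ^ 3 + 27 * B ^ 2 = 0"
    unfolding A B by (simp add: algebra_simps power3_eq_cube power2_eq_square)
  then show False using discr by simp
qed

theorem mainTheorem6:
  fixes A B :: complex and c :: "nat \<Rightarrow> nat \<Rightarrow> complex" and n :: nat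
  assumes "4 * A ^ 3 + 27 * B ^ 2 \<noteq> 0"
  shows "\<exists>p. critical_point_on_curve A B (poly2 c n) p"
proof -
  obtain x y where "y ^ 2 = poly (cubic_poly A B) x"
    and zero: "2 * y * poly2_dx c n (x, y) +
      poly (pderiv (cubic_poly A B)) x * poly2_dy c n (x, y) = 0"
    by (rule tangential_derivative_poly2_has_zero) (auto simp: degree_cubic_poly)
  then have on_curve: "y ^ 2 = x ^ 3 + A * x + B" by (simp add: poly_cubic_poly)
  have "critical_point_on_curve A B (poly2 c n) (x, y)"
  proof (rule critical_point_on_curveI)
    show "(x, y) \<in> cubic_curve A B" using on_curve by (simp add: cubic_curve_def)
    show "y \<noteq> 0 \<or> 3 * x ^ 2 + A \<noteq> 0" using assms on_curve by (rule cubic_curve_nonsingular)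
    show "(poly2 c n has_derivative
        (\<lambda>v. poly2_dx c n (x, y) * fst v + poly2_dy c n (x, y) * snd v)) (at (x, y))"
      by (rule poly2_has_derivative)
    show "2 * y * poly2_dx c n (x, y) + (3 * x ^ 2 + A) * poly2_dy c n (x, y) = 0"
      using zero by (simp add: poly_pderiv_cubic_poly)
  qed
  then show ?thesis ..
qed

end
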